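(* Let $c_{\min}\le c_{\max}$ and $d_{\min}\le d_{\max}$ be integers, $T=\{c_{\min},\dots,c_{\max}\}\times\{d_{\min},\dots,d_{\max}\}$, let $f:T\to[0,1]$ be a probability mass function, and let $a:T\to[0,1]$ be monotonic, i.e. $a_{c,d}\ge a_{c',d'}$ whenever $c\le c'$ and $d\ge d'$. Consider the problem of choosing $p:T\to\mathbb{R}$ to $$\text{minimize}\ \sum_{(c,d)\in T} f_{c,d}\,p_{c,d}$$ subject to, for every $(c,d)\in T$: $p_{c,d}-c\,a_{c,d}\ge p_{c+1,d}-c\,a_{c+1,d}$ (if $c<c_{\max}$); $p_{c,d}-c\,a_{c,d}\ge p_{c-1,d}-c\,a_{c-1,d}$ (if $c>c_{\min}$); $p_{c,d}-c\,a_{c,d}\ge p_{c,d-1}-c\,a_{c,d-1}$ (if $d>d_{\min}$); $p_{c,d}-c\,a_{c,d}\ge 0$. Then the payment rule $$p_{c,d}=c\,a_{c,d}+\sum_{k=c+1}^{c_{\max}} a_{k,d}\qquad((c,d)\in T)$$ is an optimal solution of this problem.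
   Context: Types $(c,d)$ consist of a forwarding cost $c$ and a predicted path duration $d$; $f_{c,d}$ is the probability that a bidder has type $(c,d)$, $a_{c,d}$ is the interim probability that a bidder reporting $(c,d)$ wins, and $p_{c,d}$ is its expected payment. The first three families of constraints are the adjacent incentive-compatibility constraints and the last is individual rationality; the objective is the auctioneer's expected payment. *)

theory Defs
  imports Complex_Main
begin

text \<open>Type space T = {cmin..cmax} x {dmin..dmax}; functions on T are
represented as functions int => int => real, only values on T matter.\<close>

definition types :: "int \<Rightarrow> int \<Rightarrow> int \<Rightarrow> int \<Rightarrow> (int \<times> int) set" where
  "types cmin cmax dmin dmax = {cmin..cmax} \<times> {dmin..dmax}"

definition objective :: "int \<Rightarrow> int \<Rightarrow> int \<Rightarrow> int \<Rightarrow> (int \<Rightarrow> int \<Rightarrow> real) \<Rightarrow> (int \<Rightarrow> int \<Rightarrow> real) \<Rightarrow> real" where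
  "objective cmin cmax dmin dmax f p =
     (\<Sum>(c,d)\<in>types cmin cmax dmin dmax. f c d * p c d)"

definition feasible :: "int \<Rightarrow> int \<Rightarrow> int \<Rightarrow> int \<Rightarrow> (int \<Rightarrow> int \<Rightarrow> real) \<Rightarrow> (int \<Rightarrow> int \<Rightarrow> real) \<Rightarrow> bool" where
  "feasible cmin cmax dmin dmax a p \<longleftrightarrow>
     (\<forall>(c,d)\<in>types cmin cmax dmin dmax.
        (c < cmax \<longrightarrow> p c d - of_int c * a c d \<ge> p (c+1) d - of_int c * a (c+1) d) \<and>
        (c > cmin \<longrightarrow> p c d - of_int c * a c d \<ge> p (c-1) d - of_int c * a (c-1) d) \<and>
        (d > dmin \<longrightarrow> p c d - of_int c * a c d \<ge> p c (d-1) - of_int c * a c (d-1)) \<and>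
        p c d - of_int c * a c d \<ge> 0)"

definition optimal :: "int \<Rightarrow> int \<Rightarrow> int \<Rightarrow> int \<Rightarrow> (int \<Rightarrow> int \<Rightarrow> real) \<Rightarrow> (int \<Rightarrow> int \<Rightarrow> real) \<Rightarrow> (int \<Rightarrow> int \<Rightarrow> real) \<Rightarrow> bool" where
  "optimal cmin cmax dmin dmax f a p \<longleftrightarrow>
     feasible cmin cmax dmin dmax a p \<and>
     (\<forall>q. feasible cmin cmax dmin dmax a q \<longrightarrow>
          objective cmin cmax dmin dmax f p \<le> objective cmin cmax dmin dmax f q)"

end

theory Submission
  imports Defs
begin

text \<open>Chaining the upward constraints p(k+1,d) - k a(k+1,d) \<le> p(k,d) - k a(k,d) from c
  up to cmax and closing with individual rationality shows that every feasible payment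
  leaves the bidder at least the information rent \<Sum>k>c. a(k,d). The threshold payment
  leaves exactly this rent (all upward constraints bind) and, by monotonicity of the
  allocation, satisfies the remaining constraints. Being pointwise minimal among feasible
  payments, it minimises every expectation with nonnegative weights.\<close>

definition threshold_payment :: "int \<Rightarrow> (int \<Rightarrow> int \<Rightarrow> real) \<Rightarrow> int \<Rightarrow> int \<Rightarrow> real" where
  "threshold_payment cmax a c d = of_int c * a c d + (\<Sum>k\<in>{c+1..cmax}. a k d)"

lemma sum_int_atLeastAtMost_split_first:
  fixes g :: "int \<Rightarrow> 'a::comm_monoid_add"
  assumes "c \<le> n"
  shows "(\<Sum>k\<in>{c..n}. g k) = g c + (\<Sum>k\<in>{c+1..n}. g k)"
proof -
  have "{c..n} = insert c {c+1..n}" using assms by auto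
  then show ?thesis by simp
qed

lemma threshold_payment_upward_binding:
  assumes "c < cmax"
  shows "threshold_payment cmax a c d - of_int c * a c d
           = threshold_payment cmax a (c+1) d - of_int c * a (c+1) d"
  using sum_int_atLeastAtMost_split_first[of "c+1" cmax "\<lambda>k. a k d"] assms
  by (simp add: threshold_payment_def algebra_simps)

lemma feasible_information_rent:
  assumes feasible: "feasible cmin cmax dmin dmax a q"
    and c: "cmin \<le> c" "c \<le> cmax" and d: "dmin \<le> d" "d \<le> dmax"
  shows "(\<Sum>k\<in>{c+1..cmax}. a k d) \<le> q c d - of_int c * a c d"
  using c(2,1)
proof (induction c rule: int_le_induct)
  case base
  show ?case using feasible c d by (auto simp: feasible_def types_def)
next
  case (step i)
  have upward: "q i d - of_int (i-1) * a i d \<le> q (i-1) d - of_int (i-1) * a (i-1) d"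
  proof -
    have "(i-1, d) \<in> types cmin cmax dmin dmax"
      using step.prems step.hyps d by (simp add: types_def)
    with feasible step.hyps have "q (i-1+1) d - of_int (i-1) * a (i-1+1) d
        \<le> q (i-1) d - of_int (i-1) * a (i-1) d"
      by (auto simp: feasible_def)
    then show ?thesis by simp
  qed
  have "(\<Sum>k\<in>{i-1+1..cmax}. a k d) = a i d + (\<Sum>k\<in>{i+1..cmax}. a k d)"
    using sum_int_atLeastAtMost_split_first[of i cmax "\<lambda>k. a k d"] step.hyps by simp
  also have "\<dots> \<le> q i d - of_int (i-1) * a i d"
    using step.IH step.prems by (simp add: algebra_simps)
  also have "\<dots> \<le> q (i-1) d - of_int (i-1) * a (i-1) d"
    by (fact upward)
  finally show ?case .
qed

lemma threshold_payment_le_feasible: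
  assumes "feasible cmin cmax dmin dmax a q"
    and "(c, d) \<in> types cmin cmax dmin dmax"
  shows "threshold_payment cmax a c d \<le> q c d"
  using feasible_information_rent[OF assms(1)] assms(2)
  by (force simp: threshold_payment_def types_def)

lemma feasible_threshold_payment:
  assumes nonneg: "\<And>c d. (c, d) \<in> types cmin cmax dmin dmax \<Longrightarrow> 0 \<le> a c d"
    and antimono_cost: "\<And>c d. (c, d) \<in> types cmin cmax dmin dmax \<Longrightarrow> cmin < c \<Longrightarrow>
           a c d \<le> a (c-1) d"
    and mono_duration: "\<And>c d. (c, d) \<in> types cmin cmax dmin dmax \<Longrightarrow> dmin < d \<Longrightarrow>
           a c (d-1) \<le> a c d"
  shows "feasible cmin cmax dmin dmax a (threshold_payment cmax a)"
  unfolding feasible_def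
proof (clarify, intro conjI impI)
  fix c d assume cd: "(c, d) \<in> types cmin cmax dmin dmax"
  let ?p = "threshold_payment cmax a"
  show "?p (c+1) d - of_int c * a (c+1) d \<le> ?p c d - of_int c * a c d" if "c < cmax"
    using threshold_payment_upward_binding[OF that] by simp
  show "?p (c-1) d - of_int c * a (c-1) d \<le> ?p c d - of_int c * a c d" if "cmin < c"
    using threshold_payment_upward_binding[of "c-1" cmax a d] antimono_cost[OF cd that] cd
    by (simp add: types_def algebra_simps)
  show "?p c (d-1) - of_int c * a c (d-1) \<le> ?p c d - of_int c * a c d" if "dmin < d"
    using cd that
    by (auto simp: threshold_payment_def types_def intro!: sum_mono mono_duration)
  show "0 \<le> ?p c d - of_int c * a c d"
    using cd by (auto simp: threshold_payment_def types_def intro!: sum_nonneg nonneg)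
qed

lemma optimal_if_le_all_feasible:
  assumes "\<And>c d. (c, d) \<in> types cmin cmax dmin dmax \<Longrightarrow> 0 \<le> f c d"
    and "feasible cmin cmax dmin dmax a p"
    and "\<And>q c d. feasible cmin cmax dmin dmax a q \<Longrightarrow>
           (c, d) \<in> types cmin cmax dmin dmax \<Longrightarrow> p c d \<le> q c d"
  shows "optimal cmin cmax dmin dmax f a p"
  using assms unfolding optimal_def objective_def
  by (auto intro!: sum_mono mult_left_mono)

theorem theorem2:
  fixes cmin cmax dmin dmax :: int and f a :: "int \<Rightarrow> int \<Rightarrow> real"
  assumes "cmin \<le> cmax" and "dmin \<le> dmax"
    and "\<forall>(c,d)\<in>types cmin cmax dmin dmax. 0 \<le> f c d \<and> f c d \<le> 1"
    and "(\<Sum>(c,d)\<in>types cmin cmax dmin dmax. f c d) = 1"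
    and "\<forall>(c,d)\<in>types cmin cmax dmin dmax. 0 \<le> a c d \<and> a c d \<le> 1"
    and "\<forall>(c,d)\<in>types cmin cmax dmin dmax. \<forall>(c',d')\<in>types cmin cmax dmin dmax.
           c \<le> c' \<and> d' \<le> d \<longrightarrow> a c' d' \<le> a c d"
  shows "optimal cmin cmax dmin dmax f a
           (\<lambda>c d. of_int c * a c d + (\<Sum>k\<in>{c+1..cmax}. a k d))"
proof -
  have "feasible cmin cmax dmin dmax a (threshold_payment cmax a)"
  proof (rule feasible_threshold_payment)
    show "0 \<le> a c d" if "(c, d) \<in> types cmin cmax dmin dmax" for c d
      using assms(5) that by auto
    show "a c d \<le> a (c-1) d" if "(c, d) \<in> types cmin cmax dmin dmax" "cmin < c" for c d
      using assms(6) that by (auto simp: types_def)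
    show "a c (d-1) \<le> a c d" if "(c, d) \<in> types cmin cmax dmin dmax" "dmin < d" for c d
      using assms(6) that by (auto simp: types_def)
  qed
  then have "optimal cmin cmax dmin dmax f a (threshold_payment cmax a)"
    using assms(3) threshold_payment_le_feasible
    by (intro optimal_if_le_all_feasible) auto
  then show ?thesis
    by (simp add: threshold_payment_def [abs_def])
qed

end
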